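(* Let $\mathcal{S}$ be a set with $|\mathcal{S}|=m\ge 2$, let $l\ge 4$, and fix $j$ distinct reduced words of length $g(l)<l/4$ in the free group $\langle\mathcal{S}\rangle$. Then the probability that a uniformly random cyclically reduced word of length $l$ in $\langle\mathcal{S}\rangle$ contains none of these $j$ words as a subword is at most \[ \exp\left(\frac{2}{(2m-1)^{(l/2)-1}}-\frac{lj}{9g(l)(2m-1)^{g(l)}}\right). \] *)

theory Defs
  imports Complex_Main "HOL-Library.Sublist"
begin

text \<open>Words in the free group on a set S: lists of letters (s, b), where (s, True)
 stands for the generator s and (s, False) for its inverse.\<close>

type_synonym 'a letter = "'a \<times> bool"

definition inv_letter :: "'a letter \<Rightarrow> 'a letter" where
  "inv_letter x = (fst x, \<not> snd x)"

definition word_over :: "'a set \<Rightarrow> 'a letter list \<Rightarrow> bool" where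
  "word_over S w \<longleftrightarrow> (\<forall>x\<in>set w. fst x \<in> S)"

definition reduced :: "'a letter list \<Rightarrow> bool" where
  "reduced w \<longleftrightarrow> (\<forall>i. Suc i < length w \<longrightarrow> w ! Suc i \<noteq> inv_letter (w ! i))"

definition cyc_reduced :: "'a letter list \<Rightarrow> bool" where
  "cyc_reduced w \<longleftrightarrow> reduced w \<and> (w \<noteq> [] \<longrightarrow> last w \<noteq> inv_letter (hd w))"

definition reduced_words :: "'a set \<Rightarrow> nat \<Rightarrow> 'a letter list set" where
  "reduced_words S n = {w. word_over S w \<and> length w = n \<and> reduced w}"

definition cyc_reduced_words :: "'a set \<Rightarrow> nat \<Rightarrow> 'a letter list set" where
  "cyc_reduced_words S n = {w. word_over S w \<and> length w = n \<and> cyc_reduced w}"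

end

(*
  A cyclically reduced word of length l = n + k(g + 1) avoiding W is cut into its first letter,
  k blocks of length g + 1 and a tail of length n - 1. Given the preceding letter, a block is a
  free letter followed by g letters, and each of the j forbidden words rules out at least 2m - 2 of
  the (2m - 1)^(g + 1) admissible blocks. The tail, which must lead back to the first letter, is
  bounded through the exact count of non-backtracking walks between two letters. Dividing by the
  at least (2m - 1)^l cyclically reduced words and using 1 - x <= exp (-x) gives the bound, with
  k about l / (2(g + 1)) so that the tail has length about l / 2.
*)

theory Submission
  imports Defs
begin

abbreviation letters :: "'a set \<Rightarrow> 'a letter set" where
  "letters S \<equiv> S \<times> (UNIV :: bool set)"

lemma inv_letter_inv_letter [simp]: "inv_letter (inv_letter x) = x"
  by (simp add: inv_letter_def)

lemma inv_letter_neq [simp]: "inv_letter x \<noteq> x" "x \<noteq> inv_letter x"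
  by (cases x; simp add: inv_letter_def)+

lemma inv_letter_eq_iff: "inv_letter x = y \<longleftrightarrow> x = inv_letter y"
  by auto

lemma inv_letter_in_letters [simp]: "inv_letter x \<in> letters S \<longleftrightarrow> x \<in> letters S"
  by (simp add: inv_letter_def mem_Times_iff)

lemma funpow_inv_letter: "(inv_letter ^^ n) x = (if even n then x else inv_letter x)"
  by (induction n) auto

lemma word_over_iff: "word_over S w \<longleftrightarrow> set w \<subseteq> letters S"
  by (auto simp: word_over_def mem_Times_iff)

lemma reduced_Nil [simp]: "reduced []" and reduced_singleton [simp]: "reduced [x]"
  by (simp_all add: reduced_def)

lemma reduced_Cons:
  "reduced (x # xs) \<longleftrightarrow> reduced xs \<and> (xs \<noteq> [] \<longrightarrow> hd xs \<noteq> inv_letter x)"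
  unfolding reduced_def
  by (auto simp: nth_Cons hd_conv_nth split: nat.splits)

lemma reduced_append:
  "reduced (xs @ ys) \<longleftrightarrow> reduced xs \<and> reduced ys \<and>
     (xs \<noteq> [] \<and> ys \<noteq> [] \<longrightarrow> hd ys \<noteq> inv_letter (last xs))"
  by (induction xs) (auto simp: reduced_Cons)

lemma reduced_snoc:
  "reduced (xs @ [y]) \<longleftrightarrow> reduced xs \<and> (xs \<noteq> [] \<longrightarrow> last xs \<noteq> inv_letter y)"
  by (auto simp: reduced_append reduced_Cons inv_letter_eq_iff)

definition reduced_extensions :: "'a set \<Rightarrow> nat \<Rightarrow> 'a letter \<Rightarrow> 'a letter list set" where
  "reduced_extensions S n p = {v. length v = n \<and> set v \<subseteq> letters S \<and> reduced (p # v)}"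

definition reduced_extensions_to ::
    "'a set \<Rightarrow> nat \<Rightarrow> 'a letter \<Rightarrow> 'a letter \<Rightarrow> 'a letter list set" where
  "reduced_extensions_to S n p s = {v \<in> reduced_extensions S n p. last (p # v) = s}"

lemma finite_reduced_extensions: "finite S \<Longrightarrow> finite (reduced_extensions S n p)"
  unfolding reduced_extensions_def
  by (rule finite_subset[OF _ finite_lists_length_eq[of "letters S" n]]) auto

lemma finite_reduced_extensions_to: "finite S \<Longrightarrow> finite (reduced_extensions_to S n p s)"
  by (simp add: reduced_extensions_to_def finite_reduced_extensions)

lemma reduced_extensions_0 [simp]: "reduced_extensions S 0 p = {[]}"
  by (auto simp: reduced_extensions_def)

lemma reduced_extensions_Suc:
  assumes "p \<in> letters S"
  shows "reduced_extensions S (Suc n) p =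
           (\<lambda>(x, v). x # v) ` (SIGMA x : letters S - {inv_letter p}. reduced_extensions S n x)"
  using assms by (fastforce simp: reduced_extensions_def reduced_Cons length_Suc_conv inv_letter_eq_iff)

lemma card_reduced_extensions:
  assumes "finite S" "p \<in> letters S"
  shows "card (reduced_extensions S n p) = (2 * card S - 1) ^ n"
  using assms(2)
proof (induction n arbitrary: p)
  case 0
  then show ?case by simp
next
  case (Suc n)
  have "card (reduced_extensions S (Suc n) p) =
          card (SIGMA x : letters S - {inv_letter p}. reduced_extensions S n x)"
    unfolding reduced_extensions_Suc[OF Suc.prems] by (rule card_image) (auto simp: inj_on_def)
  also have "\<dots> = (\<Sum>x \<in> letters S - {inv_letter p}. (2 * card S - 1) ^ n)"
    using assms(1) Suc by (simp add: finite_reduced_extensions)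
  also have "\<dots> = (2 * card S - 1) ^ Suc n"
    using assms(1) Suc.prems by (simp add: card_cartesian_product mult.commute)
  finally show ?case .
qed

lemma reduced_extensions_to_0: "reduced_extensions_to S 0 p s = (if s = p then {[]} else {})"
  by (auto simp: reduced_extensions_to_def)

lemma reduced_extensions_to_Suc:
  assumes "s \<in> letters S"
  shows "reduced_extensions_to S (Suc n) p s =
           (\<lambda>v. v @ [s]) ` (reduced_extensions S n p - reduced_extensions_to S n p (inv_letter s))"
proof (intro equalityI subsetI)
  fix u assume "u \<in> reduced_extensions_to S (Suc n) p s"
  moreover from this obtain v y where "u = v @ [y]"
    by (auto simp: reduced_extensions_to_def reduced_extensions_def length_Suc_conv_rev)
  ultimately show "u \<in> (\<lambda>v. v @ [s]) `
                          (reduced_extensions S n p - reduced_extensions_to S n p (inv_letter s))"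
    by (auto simp: reduced_extensions_to_def reduced_extensions_def reduced_snoc inv_letter_eq_iff
             simp flip: append_Cons)
qed (use assms in \<open>auto simp: reduced_extensions_to_def reduced_extensions_def reduced_snoc inv_letter_eq_iff
                      simp flip: append_Cons\<close>)

lemma card_reduced_extensions_to_Suc:
  assumes "finite S" "p \<in> letters S" "s \<in> letters S"
  shows "card (reduced_extensions_to S (Suc n) p s) + card (reduced_extensions_to S n p (inv_letter s)) =
           (2 * card S - 1) ^ n"
proof -
  have "card (reduced_extensions_to S (Suc n) p s) =
          card (reduced_extensions S n p - reduced_extensions_to S n p (inv_letter s))"
    unfolding reduced_extensions_to_Suc[OF assms(3)] by (rule card_image) (simp add: inj_on_def)
  also have "\<dots> = card (reduced_extensions S n p) - card (reduced_extensions_to S n p (inv_letter s))"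
    by (rule card_Diff_subset) (auto simp: reduced_extensions_to_def finite_reduced_extensions assms(1))
  moreover have "card (reduced_extensions_to S n p (inv_letter s)) \<le> card (reduced_extensions S n p)"
    by (rule card_mono) (auto simp: reduced_extensions_to_def finite_reduced_extensions assms(1))
  ultimately show ?thesis
    by (simp add: card_reduced_extensions[OF assms(1,2)])
qed

text \<open>These are non-backtracking walks on the \<open>q + 1\<close> letters, with transition matrix \<open>J - P\<close>
  for \<open>J\<close> the all-ones matrix and \<open>P\<close> the inversion permutation; since \<open>JP = J\<close> and
  \<open>P\<^sup>2 = 1\<close>, \<open>(J - P)\<^sup>n = (q\<^sup>n - (-1)\<^sup>n) / (q + 1) J + (-1)\<^sup>n P\<^sup>n\<close>.\<close>

lemma card_reduced_extensions_to:
  assumes "finite S" "p \<in> letters S" "s \<in> letters S"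
  defines "q \<equiv> 2 * real (card S) - 1"
  shows "(q + 1) * card (reduced_extensions_to S n p s) =
           q ^ n - (-1) ^ n + (q + 1) * (-1) ^ n * of_bool (s = (inv_letter ^^ n) p)"
  using assms(3)
proof (induction n arbitrary: s)
  case 0
  then show ?case by (simp add: reduced_extensions_to_0)
next
  case (Suc n)
  have "card S \<ge> 1"
    using assms(1,2) by (auto simp: Suc_le_eq card_gt_0_iff)
  then have q: "real (2 * card S - 1) = q"
    by (simp add: q_def)
  have sum: "q ^ n =
      real (card (reduced_extensions_to S (Suc n) p s)) + card (reduced_extensions_to S n p (inv_letter s))"
    using card_reduced_extensions_to_Suc[OF assms(1,2) Suc.prems, of n] q by (metis of_nat_add of_nat_power)
  have "(q + 1) * card (reduced_extensions_to S (Suc n) p s) =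
          (q + 1) * q ^ n - (q + 1) * card (reduced_extensions_to S n p (inv_letter s))"
    unfolding sum by (simp add: algebra_simps)
  also have "\<dots> = q ^ Suc n - (-1) ^ Suc n + (q + 1) * (-1) ^ Suc n * of_bool (s = (inv_letter ^^ Suc n) p)"
    using Suc.IH[of "inv_letter s"] Suc.prems by (simp add: algebra_simps inv_letter_eq_iff)
  finally show ?case .
qed

lemma card_reduced_extensions_to_le:
  assumes "finite S" "p \<in> letters S" "s \<in> letters S"
  defines "q \<equiv> 2 * real (card S) - 1"
  shows "(q + 1) * card (reduced_extensions_to S n p s) \<le> q ^ n + q"
proof -
  have "q \<ge> 1"
    using assms(1,2) by (auto simp: q_def Suc_le_eq card_gt_0_iff)
  then show ?thesis
    using card_reduced_extensions_to[OF assms(1-3), of n] by (cases "even n") (auto simp: q_def)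
qed

lemma card_reduced_extensions_to_diag_ge:
  assumes "finite S" "s \<in> letters S"
  defines "q \<equiv> 2 * real (card S) - 1"
  shows "q ^ n \<le> (q + 1) * card (reduced_extensions_to S n s s)"
proof -
  have "q \<ge> 1"
    using assms(1,2) by (auto simp: q_def Suc_le_eq card_gt_0_iff)
  then show ?thesis
    using card_reduced_extensions_to[OF assms(1,2,2), of n] by (auto simp: q_def funpow_inv_letter)
qed

lemma finite_cyc_reduced_words: "finite S \<Longrightarrow> finite (cyc_reduced_words S l)"
  unfolding cyc_reduced_words_def word_over_iff
  by (rule finite_subset[OF _ finite_lists_length_eq[of "letters S" l]]) auto

text \<open>Closing a reduced word \<open>s v\<close> that ends in \<open>s\<close> by dropping the final \<open>s\<close> gives a
  cyclically reduced word of the same length.\<close>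

lemma card_cyc_reduced_words_ge:
  assumes "finite S" "S \<noteq> {}" "l \<ge> 1"
  shows "(2 * real (card S) - 1) ^ l \<le> card (cyc_reduced_words S l)"
proof -
  define q where "q = 2 * real (card S) - 1"
  define f where "f = (\<lambda>(s :: 'a letter, v). s # butlast v)"
  have into: "f ` (SIGMA s : letters S. reduced_extensions_to S l s s) \<subseteq> cyc_reduced_words S l"
  proof (rule image_subsetI)
    fix x assume "x \<in> (SIGMA s : letters S. reduced_extensions_to S l s s)"
    then obtain s v where x: "x = (s, v)" and s: "s \<in> letters S" and v: "v \<in> reduced_extensions_to S l s s"
      by auto
    then obtain u where u: "v = u @ [s]"
      using assms(3) by (cases v rule: rev_cases) (auto simp: reduced_extensions_to_def reduced_extensions_def)
    show "f x \<in> cyc_reduced_words S l"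
      using s v assms(3)
      by (auto simp: x f_def u reduced_extensions_to_def reduced_extensions_def cyc_reduced_words_def
            cyc_reduced_def word_over_iff reduced_snoc simp flip: append_Cons)
  qed
  have "inj_on f (SIGMA s : letters S. reduced_extensions_to S l s s)"
    using assms(3)
    by (auto simp: inj_on_def f_def reduced_extensions_to_def reduced_extensions_def)
       (metis append_butlast_last_id)
  then have card_le:
      "(\<Sum>s \<in> letters S. card (reduced_extensions_to S l s s)) \<le> card (cyc_reduced_words S l)"
    using card_inj_on_le[OF _ into finite_cyc_reduced_words[OF assms(1)]] assms(1)
    by (simp add: finite_reduced_extensions_to)
  have "(q + 1) * q ^ l = (\<Sum>s \<in> letters S. q ^ l)"
    using assms(1) by (simp add: q_def card_cartesian_product)
  also have "\<dots> \<le> (\<Sum>s \<in> letters S. (q + 1) * card (reduced_extensions_to S l s s))"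
    by (rule sum_mono) (use card_reduced_extensions_to_diag_ge[OF assms(1)] in \<open>simp add: q_def\<close>)
  also have "\<dots> \<le> (q + 1) * card (cyc_reduced_words S l)"
    using card_le assms(1,2)
    by (simp add: q_def card_gt_0_iff flip: sum_distrib_left of_nat_sum)
  finally show ?thesis
    using assms(1,2) by (simp add: q_def card_gt_0_iff)
qed

lemma finite_reduced_words: "finite S \<Longrightarrow> finite (reduced_words S g)"
  unfolding reduced_words_def word_over_iff
  by (rule finite_subset[OF _ finite_lists_length_eq[of "letters S" g]]) auto

text \<open>A block is a free letter followed by \<open>g\<close> letters that must not form a word of \<open>W\<close>.
  The free letter absorbs the reducedness constraint between consecutive blocks, so every
  word of \<open>W\<close> excludes at least \<open>2 card S - 2\<close> blocks after any given letter.\<close>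

definition avoiding_blocks ::
    "'a set \<Rightarrow> 'a letter list set \<Rightarrow> nat \<Rightarrow> nat \<Rightarrow> 'a letter \<Rightarrow> 'a letter list set" where
  "avoiding_blocks S W g k p =
     {v \<in> reduced_extensions S (k * (g + 1)) p. \<forall>i<k. take g (drop (i * (g + 1) + 1) v) \<notin> W}"

lemma finite_avoiding_blocks: "finite S \<Longrightarrow> finite (avoiding_blocks S W g k p)"
  by (simp add: avoiding_blocks_def finite_reduced_extensions)

lemma card_avoiding_block_le:
  assumes "finite S" "W \<subseteq> reduced_words S g" "p \<in> letters S"
  defines "q \<equiv> 2 * real (card S) - 1"
  shows "card (avoiding_blocks S W g 1 p) \<le> q ^ (g + 1) - real (card W) * (q - 1)"
proof -
  define excluded where
    "excluded = (\<lambda>(u, x). x # u) ` (SIGMA u : W. letters S - {inv_letter p, inv_letter (hd u)})"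
  have finW: "finite W"
    using assms(1,2) finite_reduced_words finite_subset by blast
  have excluded_sub: "excluded \<subseteq> reduced_extensions S (g + 1) p"
    using assms(2) by (fastforce simp: excluded_def reduced_extensions_def reduced_words_def word_over_iff
                                       reduced_Cons inv_letter_eq_iff)
  have "avoiding_blocks S W g 1 p \<subseteq> reduced_extensions S (g + 1) p - excluded"
    using assms(2) by (auto simp: avoiding_blocks_def excluded_def reduced_words_def)
  then have "card (avoiding_blocks S W g 1 p) \<le> card (reduced_extensions S (g + 1) p) - card excluded"
    using card_mono[OF _ \<open>_ \<subseteq> _ - excluded\<close>] excluded_sub
    by (simp add: finite_reduced_extensions assms(1) card_Diff_subset finite_subset)
  moreover have "card W * (2 * card S - 2) \<le> card excluded"
  proof -
    have "card (letters S - {inv_letter p, inv_letter (hd u)}) \<ge> 2 * card S - 2" for u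
    proof -
      have "card {inv_letter p, inv_letter (hd u)} \<le> 2"
        by (simp add: card_insert_if)
      then show ?thesis
        using diff_card_le_card_Diff[of "{inv_letter p, inv_letter (hd u)}" "letters S"]
        by (simp add: card_cartesian_product mult.commute)
    qed
    then have "card W * (2 * card S - 2) \<le> (\<Sum>u\<in>W. card (letters S - {inv_letter p, inv_letter (hd u)}))"
      using sum_mono[of W "\<lambda>_. 2 * card S - 2"] by simp
    also have "\<dots> = card excluded"
      unfolding excluded_def using finW assms(1) by (subst card_image) (auto simp: inj_on_def)
    finally show ?thesis .
  qed
  ultimately have "card (avoiding_blocks S W g 1 p) + card W * (2 * card S - 2)
                     \<le> card (reduced_extensions S (g + 1) p)"
    using card_mono[OF finite_reduced_extensions[OF assms(1)] excluded_sub] by linarith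
  then have "real (card (avoiding_blocks S W g 1 p)) + real (card W) * real (2 * card S - 2)
               \<le> real (2 * card S - 1) ^ (g + 1)"
    unfolding card_reduced_extensions[OF assms(1,3)] by (metis of_nat_add of_nat_le_iff of_nat_mult of_nat_power)
  moreover have "card S \<ge> 1"
    using assms(1,3) by (auto simp: Suc_le_eq card_gt_0_iff)
  ultimately show ?thesis
    by (simp add: q_def)
qed

lemma avoiding_blocks_0 [simp]: "avoiding_blocks S W g 0 p = {[]}"
  by (simp add: avoiding_blocks_def)

lemma avoiding_blocks_Suc_subset:
  "avoiding_blocks S W g (Suc k) p \<subseteq>
     (\<lambda>(a, b). a @ b) ` (SIGMA a : avoiding_blocks S W g 1 p. avoiding_blocks S W g k (last (p # a)))"
proof
  fix v assume v: "v \<in> avoiding_blocks S W g (Suc k) p"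
  define a where "a = take (g + 1) v"
  define b where "b = drop (g + 1) v"
  have blocks: "take g (drop (i * (g + 1) + 1) v) \<notin> W" if "i < Suc k" for i
    using v that by (auto simp: avoiding_blocks_def)
  have ab: "reduced ((p # a) @ b)" "set (a @ b) \<subseteq> letters S"
    "length a = 1 * (g + 1)" "length b = k * (g + 1)"
    using v by (simp_all add: a_def b_def avoiding_blocks_def reduced_extensions_def)
  then have "reduced (p # a)" "reduced (last (p # a) # b)"
    by (auto simp: reduced_append reduced_Cons)
  moreover have "take g (drop 1 a) \<notin> W"
    using blocks[of 0] by (simp add: a_def drop_take)
  moreover have "take g (drop (i * (g + 1) + 1) b) \<notin> W" if "i < k" for i
    using blocks[of "Suc i"] that by (simp add: b_def add.commute add.left_commute)
  ultimately have "a \<in> avoiding_blocks S W g 1 p" "b \<in> avoiding_blocks S W g k (last (p # a))"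
    using ab by (auto simp: avoiding_blocks_def reduced_extensions_def)
  then show "v \<in> (\<lambda>(a, b). a @ b) `
      (SIGMA a : avoiding_blocks S W g 1 p. avoiding_blocks S W g k (last (p # a)))"
    by (auto intro!: image_eqI[of _ _ "(a, b)"] simp: a_def b_def)
qed

lemma card_avoiding_blocks_le:
  fixes R :: real
  assumes "finite S" "\<And>p. p \<in> letters S \<Longrightarrow> card (avoiding_blocks S W g 1 p) \<le> R"
    "p \<in> letters S"
  shows "card (avoiding_blocks S W g k p) \<le> R ^ k"
  using assms(3)
proof (induction k arbitrary: p)
  case 0
  then show ?case by simp
next
  case (Suc k)
  let ?Blocks = "SIGMA a : avoiding_blocks S W g 1 p. avoiding_blocks S W g k (last (p # a))"
  have fin: "finite ?Blocks"
    by (auto intro: finite_avoiding_blocks assms(1))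
  have last_letter: "last (p # a) \<in> letters S" if "a \<in> avoiding_blocks S W g 1 p" for a
    using that Suc.prems by (auto simp: avoiding_blocks_def reduced_extensions_def)
  have "card (avoiding_blocks S W g (Suc k) p) \<le> card ((\<lambda>(a, b). a @ b) ` ?Blocks)"
    using fin by (intro card_mono avoiding_blocks_Suc_subset) auto
  also have "\<dots> \<le> card ?Blocks"
    using fin by (rule card_image_le)
  finally have "real (card (avoiding_blocks S W g (Suc k) p))
               \<le> (\<Sum>a \<in> avoiding_blocks S W g 1 p. real (card (avoiding_blocks S W g k (last (p # a)))))"
    using assms(1) by (simp add: finite_avoiding_blocks flip: of_nat_sum)
  also have "\<dots> \<le> (\<Sum>a \<in> avoiding_blocks S W g 1 p. R ^ k)"
    by (intro sum_mono Suc.IH last_letter)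
  also have "\<dots> = card (avoiding_blocks S W g 1 p) * R ^ k"
    by simp
  also have "\<dots> \<le> R * R ^ k"
    using assms(2)[OF Suc.prems] by (intro mult_right_mono) (auto intro: order_trans[OF _ Suc.IH[OF Suc.prems]])
  finally show ?case by simp
qed

abbreviation avoiding_cyc_reduced_words ::
    "'a set \<Rightarrow> 'a letter list set \<Rightarrow> nat \<Rightarrow> 'a letter list set" where
  "avoiding_cyc_reduced_words S W l \<equiv> {w \<in> cyc_reduced_words S l. \<forall>u\<in>W. \<not> sublist u w}"

lemma avoiding_words_subset:
  assumes "l = n + k * (g + 1)" "n \<ge> 1"
  shows "avoiding_cyc_reduced_words S W l \<subseteq>
           (\<lambda>(s, v, t). s # v @ t) `
             (SIGMA s : letters S. SIGMA v : avoiding_blocks S W g k s.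
                butlast ` reduced_extensions_to S n (last (s # v)) s)"
proof
  fix w assume w: "w \<in> avoiding_cyc_reduced_words S W l"
  then have "w \<noteq> []"
    using assms by (auto simp: cyc_reduced_words_def)
  then obtain s r where w_eq: "w = s # r"
    by (cases w) auto
  define v where "v = take (k * (g + 1)) r"
  define t where "t = drop (k * (g + 1)) r"
  define p where "p = last (s # v)"
  have w_split: "w = s # v @ t"
    by (simp add: w_eq v_def t_def)
  have len: "length v = k * (g + 1)" "length t = n - 1"
    using w assms by (auto simp: w_eq v_def t_def cyc_reduced_words_def)
  have letters: "s \<in> letters S" "set v \<subseteq> letters S" "set t \<subseteq> letters S"
    using w by (auto simp: w_split cyc_reduced_words_def word_over_iff)
  have "reduced ((s # v) @ t)" "last (p # t) \<noteq> inv_letter s"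
    using w by (auto simp: w_split p_def cyc_reduced_words_def cyc_reduced_def last_append)
  then have reduced: "reduced (s # v)" "reduced (p # t @ [s])"
    by (auto simp: p_def reduced_append reduced_Cons reduced_snoc simp flip: append_Cons)
  have "take g (drop (i * (g + 1) + 1) v) \<notin> W" for i
  proof
    assume "take g (drop (i * (g + 1) + 1) v) \<in> W"
    moreover have "sublist (take g (drop (i * (g + 1) + 1) v)) w"
      unfolding w_split
      by (meson sublist_Cons_right sublist_append_rightI sublist_drop sublist_take
                sublist_order.order.trans)
    ultimately show False
      using w by blast
  qed
  then have "v \<in> avoiding_blocks S W g k s"
    using len letters reduced by (simp add: avoiding_blocks_def reduced_extensions_def)
  moreover have "t \<in> butlast ` reduced_extensions_to S n p s"
    using len letters reduced assms(2)
    by (intro image_eqI[of _ _ "t @ [s]"]) (auto simp: reduced_extensions_to_def reduced_extensions_def)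
  ultimately show "w \<in> (\<lambda>(s, v, t). s # v @ t) `
      (SIGMA s : letters S. SIGMA v : avoiding_blocks S W g k s.
         butlast ` reduced_extensions_to S n (last (s # v)) s)"
    using letters by (auto simp: w_split p_def intro!: image_eqI[of _ _ "(s, v, t)"])
qed

lemma card_avoiding_words_le:
  fixes R :: real
  assumes "finite S" "S \<noteq> {}" "l = n + k * (g + 1)" "n \<ge> 1"
    and block_bound: "\<And>p. p \<in> letters S \<Longrightarrow> card (avoiding_blocks S W g 1 p) \<le> R"
  defines "q \<equiv> 2 * real (card S) - 1"
  shows "card (avoiding_cyc_reduced_words S W l) \<le> R ^ k * (q ^ n + q)"
proof -
  let ?E = "\<lambda>s v. reduced_extensions_to S n (last (s # v)) s"
  let ?T = "SIGMA s : letters S. SIGMA v : avoiding_blocks S W g k s. butlast ` ?E s v"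
  have fin: "finite ?T"
    using assms(1)
    by (intro finite_SigmaI finite_imageI finite_avoiding_blocks finite_reduced_extensions_to) auto
  have "card (avoiding_cyc_reduced_words S W l) \<le> card ((\<lambda>(s, v, t). s # v @ t) ` ?T)"
    using fin by (intro card_mono avoiding_words_subset assms(3,4)) auto
  also have "\<dots> \<le> card ?T"
    using fin by (rule card_image_le)
  also have "\<dots> \<le> (\<Sum>s \<in> letters S. \<Sum>v \<in> avoiding_blocks S W g k s. card (?E s v))"
    using assms(1)
    by (simp add: finite_avoiding_blocks finite_reduced_extensions_to card_image_le sum_mono)
  finally have "real (card (avoiding_cyc_reduced_words S W l))
      \<le> (\<Sum>s \<in> letters S. \<Sum>v \<in> avoiding_blocks S W g k s. real (card (?E s v)))"
    by (simp flip: of_nat_sum)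
  then have "(q + 1) * card (avoiding_cyc_reduced_words S W l)
      \<le> (\<Sum>s \<in> letters S. \<Sum>v \<in> avoiding_blocks S W g k s. (q + 1) * card (?E s v))"
    by (simp add: q_def mult_left_mono flip: sum_distrib_left)
  also have "\<dots> \<le> (\<Sum>s \<in> letters S. \<Sum>v \<in> avoiding_blocks S W g k s. q ^ n + q)"
    by (intro sum_mono card_reduced_extensions_to_le[OF assms(1), folded q_def])
       (auto simp: avoiding_blocks_def reduced_extensions_def)
  also have "\<dots> \<le> (\<Sum>s \<in> letters S. R ^ k * (q ^ n + q))"
  proof (rule sum_mono)
    fix s assume "s \<in> letters S"
    moreover have "q \<ge> 1"
      using assms(1,2) by (simp add: q_def Suc_le_eq card_gt_0_iff)
    ultimately show "(\<Sum>v \<in> avoiding_blocks S W g k s. q ^ n + q) \<le> R ^ k * (q ^ n + q)"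
      using card_avoiding_blocks_le[OF assms(1) block_bound] by (simp add: mult_right_mono)
  qed
  also have "\<dots> = (q + 1) * (R ^ k * (q ^ n + q))"
    using assms(1) by (simp add: q_def card_cartesian_product)
  finally show ?thesis
    using assms(1,2) by (simp add: q_def card_gt_0_iff)
qed

lemma power_ratio_le_exp:
  fixes q R :: real
  assumes "q > 0" "R \<ge> 0"
  shows "R ^ k * (q ^ n + q) / q ^ (n + k * d) \<le> exp (q / q ^ n - real k * (1 - R / q ^ d))"
proof -
  have "q ^ (n + k * d) = (q ^ d) ^ k * q ^ n"
    by (simp add: power_add power_mult mult.commute)
  then have "R ^ k * (q ^ n + q) / q ^ (n + k * d) = (R / q ^ d) ^ k * (1 + q / q ^ n)"
    using assms(1) by (simp add: field_simps)
  also have "\<dots> \<le> exp (- (1 - R / q ^ d)) ^ k * exp (q / q ^ n)"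
    using assms exp_ge_add_one_self[of "- (1 - R / q ^ d)"] exp_ge_add_one_self[of "q / q ^ n"]
    by (intro mult_mono power_mono) auto
  also have "\<dots> = exp (q / q ^ n - real k * (1 - R / q ^ d))"
    unfolding exp_of_nat_mult[symmetric] exp_add[symmetric] by (simp add: algebra_simps)
  finally show ?thesis .
qed

lemma divide_power_le_powr:
  fixes q :: real
  assumes "q \<ge> 1" "l \<le> 2 * n"
  shows "q / q ^ n \<le> 1 / q powr (real l / 2 - 1)"
proof -
  have "q / q ^ n = 1 / q powr (real n - 1)"
    using assms(1) by (simp add: powr_diff powr_realpow)
  also have "\<dots> \<le> 1 / q powr (real l / 2 - 1)"
    using assms by (intro divide_left_mono powr_mono) auto
  finally show ?thesis .
qed

lemma le_six_mult_block_count: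
  fixes l g :: nat
  assumes "g \<ge> 1" "4 * g < l"
  shows "l \<le> 6 * g * (l div (2 * (g + 1))) \<or> (g = 1 \<and> l = 7)"
proof -
  define k where "k = l div (2 * (g + 1))"
  have "l = 2 * (g + 1) * k + l mod (2 * (g + 1))" "l mod (2 * (g + 1)) < 2 * (g + 1)"
    by (simp_all only: k_def mult_div_mod_eq) simp
  then have l_less: "l < 2 * (g + 1) * (k + 1)"
    unfolding distrib_left mult_1_right by linarith
  have "k \<ge> 1"
    using assms by (simp add: k_def Suc_le_eq div_greater_zero_iff)
  then have "\<exists>k'. k = k' + 1"
    by presburger
  then obtain k' where k: "k = k' + 1" ..
  have "l \<le> 6 * g * k \<or> (g = 1 \<and> l = 7)"
  proof (cases "g = 1")
    case True
    then show ?thesis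
      using l_less assms(2) by (simp add: k) presburger
  next
    case False
    have "\<exists>g'. g = g' + 2"
      using assms(1) False by presburger
    then obtain g' where "g = g' + 2" ..
    then show ?thesis
      using l_less by (simp add: k algebra_simps)
  qed
  then show ?thesis
    by (simp add: k_def)
qed

lemma block_split_exists:
  fixes m l g :: nat
  assumes "m \<ge> 2" "g \<ge> 1" "4 * g < l"
  defines "q \<equiv> 2 * real m - 1"
  shows "\<exists>k n. l = n + k * (g + 1) \<and> n \<ge> 1 \<and> q / q ^ n \<le> 2 / q powr (real l / 2 - 1) \<and>
                real l * q \<le> 9 * real g * real k * (q - 1)"
proof (cases "g = 1 \<and> l = 7 \<and> m = 2")
  case True
  \<comment> \<open>the general choice \<open>k = l div (2 * (g + 1)) = 1\<close> would need \<open>7 * 3 \<le> 9 * 2\<close>\<close>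
  have "3 powr (5 / 2 :: real) = 9 * sqrt 3"
    by (simp add: powr_add[of 3 2 "1/2", simplified] powr_half_sqrt)
  moreover have "sqrt 3 \<le> (2 :: real)"
    using real_sqrt_le_mono[of 3 4] by simp
  ultimately have "3 / 3 ^ 3 \<le> 2 / 3 powr (5 / 2 :: real)"
    by (simp add: field_simps)
  then show ?thesis
    using True by (intro exI[of _ 2] exI[of _ 3]) (simp add: q_def)
next
  case False
  define k where "k = l div (2 * (g + 1))"
  define n where "n = l - k * (g + 1)"
  have "2 * (k * (g + 1)) \<le> l"
    using div_times_less_eq_dividend[of l "2 * (g + 1)"] by (simp add: k_def algebra_simps)
  then have split: "l = n + k * (g + 1)" "l \<le> 2 * n" "n \<ge> 1"
    using assms(2,3) by (auto simp: n_def)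
  have q3: "q \<ge> 3"
    using assms(1) by (simp add: q_def)
  have "1 / q powr (real l / 2 - 1) \<le> 2 / q powr (real l / 2 - 1)"
    by (simp add: divide_right_mono)
  then have "q / q ^ n \<le> 2 / q powr (real l / 2 - 1)"
    using divide_power_le_powr[OF _ split(2), of q] q3 by linarith
  moreover have "real l * q \<le> 9 * real g * real k * (q - 1)"
  proof (cases "l \<le> 6 * g * k")
    case True
    then have "real l \<le> real (6 * g * k)"
      by (simp only: of_nat_le_iff)
    then have "real l * q \<le> (real g * real k) * (6 * q)"
      using q3 mult_right_mono[of "real l" "real (6 * g * k)" q] by (simp add: mult_ac)
    also have "\<dots> \<le> (real g * real k) * (9 * (q - 1))"
      using q3 by (intro mult_left_mono) auto
    finally show ?thesis
      by (simp add: algebra_simps)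
  next
    case False
    then have "g = 1" "l = 7" "k = 1"
      using le_six_mult_block_count[OF assms(2,3)] by (auto simp: k_def)
    moreover from this have "q \<ge> 5"
      using \<open>\<not> (g = 1 \<and> l = 7 \<and> m = 2)\<close> assms(1) by (simp add: q_def)
    ultimately show ?thesis
      by simp
  qed
  ultimately show ?thesis
    using split by blast
qed

lemma exponent_choice:
  fixes m l g :: nat and j :: real
  assumes "m \<ge> 2" "g \<ge> 1" "4 * g < l" "j \<ge> 0"
  defines "q \<equiv> 2 * real m - 1"
  shows "\<exists>k n. l = n + k * (g + 1) \<and> n \<ge> 1 \<and>
           q / q ^ n - real k * (j * (q - 1) / q ^ (g + 1))
             \<le> 2 / q powr (real l / 2 - 1) - real l * j / (9 * real g * q ^ g)"
proof -
  obtain k n where split: "l = n + k * (g + 1)" "n \<ge> 1"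
    and first: "q / q ^ n \<le> 2 / q powr (real l / 2 - 1)"
    and lq: "real l * q \<le> 9 * real g * real k * (q - 1)"
    using block_split_exists[OF assms(1-3)] unfolding q_def by blast
  have q: "q \<ge> 3"
    using assms(1) by (simp add: q_def)
  have "real l * j / (9 * real g * q ^ g) = (real l * q) * j / (9 * real g * q ^ (g + 1))"
    using q by simp
  also have "\<dots> \<le> (9 * real g * real k * (q - 1)) * j / (9 * real g * q ^ (g + 1))"
    using lq q assms(2,4) by (intro divide_right_mono mult_right_mono) auto
  also have "\<dots> = real k * (j * (q - 1) / q ^ (g + 1))"
    using assms(2) by simp
  finally show ?thesis
    using split first by (intro exI[of _ k] exI[of _ n]) auto
qed

lemma avoiding_ratio_le_exp:
  assumes "finite S" "S \<noteq> {}" "W \<subseteq> reduced_words S g" "l = n + k * (g + 1)" "n \<ge> 1"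
  defines "q \<equiv> 2 * real (card S) - 1"
  shows "real (card (avoiding_cyc_reduced_words S W l))
           / real (card (cyc_reduced_words S l))
         \<le> exp (q / q ^ n - real k * (real (card W) * (q - 1) / q ^ (g + 1)))"
proof -
  define R where "R = q ^ (g + 1) - card W * (q - 1)"
  have block_bound: "card (avoiding_blocks S W g 1 p) \<le> R" if "p \<in> letters S" for p
    unfolding R_def q_def by (rule card_avoiding_block_le[OF assms(1,3) that])
  obtain x where "x \<in> S"
    using assms(2) by blast
  then have "R \<ge> 0"
    using block_bound[of "(x, True)"] by (simp add: order_trans[OF of_nat_0_le_iff])
  have "q \<ge> 1"
    using assms(1,2) by (simp add: q_def Suc_le_eq card_gt_0_iff)
  have "real (card (avoiding_cyc_reduced_words S W l))
          / real (card (cyc_reduced_words S l)) \<le> R ^ k * (q ^ n + q) / q ^ l"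
  proof (rule frac_le)
    show "card (avoiding_cyc_reduced_words S W l) \<le> R ^ k * (q ^ n + q)"
      unfolding q_def by (rule card_avoiding_words_le[OF assms(1,2,4,5) block_bound])
    show "q ^ l \<le> card (cyc_reduced_words S l)"
      unfolding q_def using assms(4,5) by (intro card_cyc_reduced_words_ge assms(1,2)) simp
  qed (use \<open>R \<ge> 0\<close> \<open>q \<ge> 1\<close> in auto)
  also have "\<dots> \<le> exp (q / q ^ n - real k * (1 - R / q ^ (g + 1)))"
    unfolding assms(4) using \<open>R \<ge> 0\<close> \<open>q \<ge> 1\<close> by (intro power_ratio_le_exp) auto
  also have "1 - R / q ^ (g + 1) = card W * (q - 1) / q ^ (g + 1)"
    using \<open>q \<ge> 1\<close> by (simp add: R_def diff_divide_distrib)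
  finally show ?thesis .
qed

theorem lemma7p3:
  fixes S :: "'a set" and m l g j :: nat and W :: "'a letter list set"
  assumes "finite S" and "card S = m" and "m \<ge> 2"
    and "l \<ge> 4"
    and "real g < real l / 4"
    and "W \<subseteq> reduced_words S g" and "card W = j"
  shows "real (card {w \<in> cyc_reduced_words S l. \<forall>u\<in>W. \<not> sublist u w})
           / real (card (cyc_reduced_words S l))
         \<le> exp (2 / (2 * real m - 1) powr (real l / 2 - 1)
                 - real l * real j / (9 * real g * (2 * real m - 1) ^ g))"
proof (cases "j = 0 \<or> g = 0")
  case True
  have "card (avoiding_cyc_reduced_words S W l) \<le> card (cyc_reduced_words S l)"
    by (intro card_mono finite_cyc_reduced_words assms(1)) auto
  then have "real (card (avoiding_cyc_reduced_words S W l)) / real (card (cyc_reduced_words S l)) \<le> 1"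
    by (auto simp: divide_le_eq_1)
  moreover have "1 \<le> exp (2 / (2 * real m - 1) powr (real l / 2 - 1)
                            - real l * real j / (9 * real g * (2 * real m - 1) ^ g))"
    using True by auto
  ultimately show ?thesis
    by linarith
next
  case False
  define q where "q = 2 * real m - 1"
  obtain k n where split: "l = n + k * (g + 1)" "n \<ge> 1" and exponent:
    "q / q ^ n - real k * (real j * (q - 1) / q ^ (g + 1))
       \<le> 2 / q powr (real l / 2 - 1) - real l * real j / (9 * real g * q ^ g)"
    using exponent_choice[OF assms(3), of g l j] False assms(5) unfolding q_def by auto
  have "S \<noteq> {}"
    using assms(2,3) by auto
  from avoiding_ratio_le_exp[OF assms(1) this assms(6) split] exponent
  show ?thesis
    unfolding assms(2,7) q_def by (meson exp_le_cancel_iff order_trans)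
qed

end
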